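(* Let $G$ be an infinite, connected, countable, locally finite $d$-regular graph equipped with a random labeling. Then with probability $1$ the following holds: for every $n\in\mathbb{N}$ there are infinitely many pairs $(v,\ell)$, with $v$ a vertex and $\ell\in\{1,\dots,d\}$ a port, such that the basic walk starting at $v$ with initial port $\ell$ visits (at least) $n$ distinct vertices.
   Context: Each undirected edge $\{v,w\}$ is regarded as two arcs $v\to w$ and $w\to v$. A labeling assigns, at each vertex $v$, the port numbers $1,\dots,d$ bijectively to the $d$ arcs leaving $v$ (labels on $v\to w$ and $w\to v$ need not agree). In a random labeling these bijections are chosen uniformly at random, independently for different vertices. Given a labeling, a starting vertex $v_0$ and an initial port $\ell$, the basic walk leaves $v_0$ along the arc labeled $\ell$; thereafter, whenever it enters a vertex $v$ along an arc whose label is $i$, it leaves $v$ along the arc out of $v$ labeled $(i \bmod d)+1$. *)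

theory Defs
  imports "HOL-Probability.Probability"
begin

text \<open>Graphs: the vertex set is the whole (countable) type 'a, edges are given by a
  symmetric irreflexive relation E.  The neighbourhood of v is the set of heads of the
  arcs leaving v.\<close>

definition nbrs :: "('a \<Rightarrow> 'a \<Rightarrow> bool) \<Rightarrow> 'a \<Rightarrow> 'a set" where
  "nbrs E v = {w. E v w}"

definition regular_graph :: "('a \<Rightarrow> 'a \<Rightarrow> bool) \<Rightarrow> nat \<Rightarrow> bool" where
  "regular_graph E d \<longleftrightarrow> (\<forall>v w. E v w \<longrightarrow> E w v) \<and> (\<forall>v. \<not> E v v)
     \<and> (\<forall>v. finite (nbrs E v) \<and> card (nbrs E v) = d)"

definition connected_graph :: "('a \<Rightarrow> 'a \<Rightarrow> bool) \<Rightarrow> bool" where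
  "connected_graph E \<longleftrightarrow> (\<forall>v w. E\<^sup>*\<^sup>* v w)"

text \<open>A local labeling at v: the port numbers 1..d assigned bijectively to the arcs
  leaving v; it is represented by the map port i \<mapsto> head of the arc labelled i.\<close>

definition local_labelings :: "('a \<Rightarrow> 'a \<Rightarrow> bool) \<Rightarrow> nat \<Rightarrow> 'a \<Rightarrow> (nat \<Rightarrow> 'a) set" where
  "local_labelings E d v = {f \<in> {1..d} \<rightarrow>\<^sub>E nbrs E v. bij_betw f {1..d} (nbrs E v)}"

definition random_labeling :: "('a \<Rightarrow> 'a \<Rightarrow> bool) \<Rightarrow> nat \<Rightarrow> ('a \<Rightarrow> nat \<Rightarrow> 'a) measure" where
  "random_labeling E d = (\<Pi>\<^sub>M v\<in>UNIV. uniform_count_measure (local_labelings E d v))"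

text \<open>State (v, i): the walk is at v and leaves v along the arc labelled i.
  After traversing the arc labelled i it enters the next vertex along an arc with label i
  and leaves it along the arc labelled (i mod d) + 1.\<close>

definition walk_step :: "('a \<Rightarrow> nat \<Rightarrow> 'a) \<Rightarrow> nat \<Rightarrow> 'a \<times> nat \<Rightarrow> 'a \<times> nat" where
  "walk_step L d s = (L (fst s) (snd s), (snd s mod d) + 1)"

definition walk_pos :: "('a \<Rightarrow> nat \<Rightarrow> 'a) \<Rightarrow> nat \<Rightarrow> 'a \<Rightarrow> nat \<Rightarrow> nat \<Rightarrow> 'a" where
  "walk_pos L d v l k = fst ((walk_step L d ^^ k) (v, l))"

definition visited :: "('a \<Rightarrow> nat \<Rightarrow> 'a) \<Rightarrow> nat \<Rightarrow> 'a \<Rightarrow> nat \<Rightarrow> 'a set" where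
  "visited L d v l = range (walk_pos L d v l)"

text \<open>The walk visits at least n distinct vertices (works also if it visits infinitely many).\<close>

definition visits_at_least :: "('a \<Rightarrow> nat \<Rightarrow> 'a) \<Rightarrow> nat \<Rightarrow> 'a \<Rightarrow> nat \<Rightarrow> nat \<Rightarrow> bool" where
  "visits_at_least L d v l n \<longleftrightarrow> (\<exists>S. S \<subseteq> visited L d v l \<and> finite S \<and> card S = n)"

end

theory Submission
  imports Defs
begin

(* Started at p_0 with port 1, the basic walk follows a path p_0, ..., p_n as long as each p_i
   sends port (i mod d) + 1 to p_(i+1); under a random labeling this happens with probability
   at least d^(-dn), since only the local labelings at the n distinct vertices p_0, ..., p_(n-1)
   matter. Balls of the locally finite graph are finite while the graph is infinite and
   connected, so there are vertices at every distance from a fixed root, hence geodesic segments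
   covering the distances j(n+1), ..., j(n+1)+n for every j. These segments are pairwise
   disjoint, so the events that the labeling makes the walk follow segment j are independent
   with probabilities bounded away from 0, and by the second Borel-Cantelli argument infinitely
   many of them occur almost surely. *)

lemma (in prob_space) AE_infinitely_often_if_indep_compl:
  fixes A :: "nat \<Rightarrow> 'a set"
  assumes A: "\<And>j. A j \<in> events" and indep: "indep_events (\<lambda>j. space M - A j) UNIV"
    and q: "0 < q" "\<And>j. q \<le> prob (A j)"
  shows "AE x in M. infinite {j. x \<in> A j}"
proof -
  have q_le_1: "q \<le> 1"
    using q(2)[of 0] prob_le_1[of "A 0"] by linarith
  have never_after: "prob (space M - (\<Union>j\<in>{N..}. A j)) = 0" for N
  proof -
    let ?B = "space M - (\<Union>j\<in>{N..}. A j)"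
    have geometric: "prob ?B \<le> (1 - q) ^ Suc m" for m
    proof -
      have "prob ?B \<le> prob (\<Inter>j\<in>{N..N+m}. space M - A j)"
        using A by (intro finite_measure_mono) auto
      also have "\<dots> = (\<Prod>j\<in>{N..N+m}. prob (space M - A j))"
        using indep by (auto simp: indep_events_def)
      also have "\<dots> \<le> (\<Prod>j\<in>{N..N+m}. 1 - q)"
        using A q by (intro prod_mono) (auto simp: prob_compl)
      also have "\<dots> = (1 - q) ^ Suc m" by simp
      finally show ?thesis .
    qed
    have "(\<lambda>m. (1 - q) ^ Suc m) \<longlonglongrightarrow> 0"
      using q q_le_1 by (intro LIMSEQ_Suc LIMSEQ_power_zero) auto
    then have "prob ?B \<le> 0"
      using geometric by (intro LIMSEQ_le_const) auto
    then show ?thesis by (simp add: measure_le_0_iff)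
  qed
  have "AE x in M. \<forall>N. x \<in> (\<Union>j\<in>{N..}. A j)"
  proof (subst AE_all_countable, intro allI AE_prob_1)
    fix N
    have "(\<Union>j\<in>{N..}. A j) \<in> events" using A by auto
    then show "prob (\<Union>j\<in>{N..}. A j) = 1"
      using never_after[of N] by (simp add: prob_compl)
  qed
  then show ?thesis
    by eventually_elim (auto simp: infinite_nat_iff_unbounded_le)
qed

lemma indep_events_PiM_disjoint_blocks:
  fixes M :: "'i \<Rightarrow> 'a measure" and K :: "'j \<Rightarrow> 'i set"
  assumes M: "\<And>i. prob_space (M i)" and disj: "disjoint_family K"
    and Q: "\<And>j. {x \<in> space (PiM (K j) M). Q j x} \<in> sets (PiM (K j) M)"
  shows "prob_space.indep_events (PiM UNIV M)
           (\<lambda>j. {\<omega> \<in> space (PiM UNIV M). Q j (restrict \<omega> (K j))}) UNIV"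
proof -
  interpret product_prob_space M UNIV
    using M by (rule product_prob_spaceI)
  let ?P = "PiM UNIV M"
  have coordinates: "P.indep_vars M (\<lambda>i \<omega>. \<omega> i) UNIV"
  proof (subst P.indep_vars_iff_distr_eq_PiM)
    show "random_variable (M i) (\<lambda>\<omega>. \<omega> i)" for i
      by (simp add: measurable_component_singleton)
    have "distr ?P ?P (\<lambda>\<omega>. \<lambda>i\<in>UNIV. \<omega> i) = ?P"
      by (simp add: restrict_UNIV distr_id)
    also have "\<dots> = (\<Pi>\<^sub>M i\<in>UNIV. distr ?P (M i) (\<lambda>\<omega>. \<omega> i))"
      by (intro PiM_cong) (auto simp: PiM_component)
    finally show "distr ?P ?P (\<lambda>\<omega>. \<lambda>i\<in>UNIV. \<omega> i) = (\<Pi>\<^sub>M i\<in>UNIV. distr ?P (M i) (\<lambda>\<omega>. \<omega> i))" .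
  qed simp
  have "P.indep_vars (\<lambda>j. PiM (K j) M) (\<lambda>j \<omega>. restrict \<omega> (K j)) UNIV"
    using P.indep_vars_restrict[OF coordinates, of UNIV K] disj by simp
  then show ?thesis
    using Q by (rule P.indep_eventsI_indep_vars)
qed

lemma AE_PiM_infinitely_many_disjoint_cylinders:
  fixes M :: "'i \<Rightarrow> 'a measure" and K :: "nat \<Rightarrow> 'i set"
  assumes M: "\<And>i. prob_space (M i)"
    and K: "\<And>j. finite (K j)" "disjoint_family K"
    and Y: "\<And>j i. Y j i \<in> sets (M i)"
    and q: "0 < q" "\<And>j. q \<le> (\<Prod>i\<in>K j. measure (M i) (Y j i))"
  shows "AE \<omega> in PiM UNIV M. infinite {j. \<forall>i\<in>K j. \<omega> i \<in> Y j i}"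
proof -
  interpret product_prob_space M UNIV
    using M by (rule product_prob_spaceI)
  define C where "C j = prod_emb UNIV M (K j) (PiE (K j) (Y j))" for j
  have C_eq: "C j = {\<omega> \<in> space (PiM UNIV M). \<forall>i\<in>K j. \<omega> i \<in> Y j i}" for j
    unfolding C_def prod_emb_def by (auto simp: PiE_iff space_PiM)
  have C_compl: "space (PiM UNIV M) - C j =
      {\<omega> \<in> space (PiM UNIV M). restrict \<omega> (K j) \<notin> PiE (K j) (Y j)}" for j
    unfolding C_eq by (auto simp: PiE_iff)
  have "P.indep_events (\<lambda>j. space (PiM UNIV M) - C j) UNIV"
    unfolding C_compl using K Y
    by (intro indep_events_PiM_disjoint_blocks M)
       (auto intro!: sets.sets_Collect_neg sets_PiM_I_finite simp: Collect_mem_eq)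
  moreover have "C j \<in> P.events" for j
    unfolding C_def using K Y by (intro sets_PiM_I) auto
  moreover have "P.prob (C j) = (\<Prod>i\<in>K j. measure (M i) (Y j i))" for j
    unfolding C_def using K Y by (intro measure_PiM_emb) auto
  ultimately have "AE \<omega> in PiM UNIV M. infinite {j. \<omega> \<in> C j}"
    using q by (intro P.AE_infinitely_often_if_indep_compl) auto
  with AE_space show ?thesis
    by eventually_elim (simp add: C_eq)
qed

definition graph_dist :: "('a \<Rightarrow> 'a \<Rightarrow> bool) \<Rightarrow> 'a \<Rightarrow> 'a \<Rightarrow> nat" where
  "graph_dist E r w = (LEAST k. (E ^^ k) r w)"

lemma relpowp_graph_dist: "connected_graph E \<Longrightarrow> (E ^^ graph_dist E r w) r w"
  unfolding graph_dist_def connected_graph_def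
  by (metis (mono_tags) LeastI_ex rtranclp_power)

lemma graph_dist_le: "(E ^^ m) r w \<Longrightarrow> graph_dist E r w \<le> m"
  unfolding graph_dist_def by (rule Least_le)

lemma finite_ball:
  assumes fin: "\<And>v. finite (nbrs E v)"
  shows "finite {w. \<exists>m\<le>k. (E ^^ m) r w}"
proof (induction k)
  case (Suc k)
  let ?B = "{w. \<exists>m\<le>k. (E ^^ m) r w}"
  have "{w. \<exists>m\<le>Suc k. (E ^^ m) r w} \<subseteq> ?B \<union> (\<Union>u\<in>?B. nbrs E u)"
  proof
    fix w assume "w \<in> {w. \<exists>m\<le>Suc k. (E ^^ m) r w}"
    then obtain m where m: "m \<le> Suc k" "(E ^^ m) r w" by auto
    show "w \<in> ?B \<union> (\<Union>u\<in>?B. nbrs E u)"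
    proof (cases m)
      case 0 with m show ?thesis by auto
    next
      case (Suc m')
      with m obtain u where "(E ^^ m') r u" "E u w" by (auto elim: relpowp_Suc_E)
      with m Suc show ?thesis by (auto simp: nbrs_def)
    qed
  qed
  moreover have "finite (?B \<union> (\<Union>u\<in>?B. nbrs E u))"
    using Suc fin by auto
  ultimately show ?case by (rule finite_subset)
qed simp

lemma ex_vertex_at_graph_dist:
  assumes fin: "\<And>v. finite (nbrs E v)" and conn: "connected_graph E"
    and inf: "infinite (UNIV :: 'a set)"
  shows "\<exists>u::'a. graph_dist E r u = k"
proof -
  obtain w where w: "w \<notin> {w. \<exists>m\<le>k. (E ^^ m) r w}"
    using ex_new_if_finite[OF inf finite_ball[OF fin]] by blast
  let ?m = "graph_dist E r w"
  have reach: "(E ^^ ?m) r w" by (rule relpowp_graph_dist[OF conn])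
  with w have "k < ?m" using not_le by blast
  with reach have "(E ^^ (k + (?m - k))) r w" by simp
  then obtain u where u: "(E ^^ k) r u" "(E ^^ (?m - k)) u w"
    unfolding relpowp_add by auto
  have "(E ^^ (graph_dist E r u + (?m - k))) r w"
    unfolding relpowp_add using relpowp_graph_dist[OF conn, of r u] u(2) by auto
  then have "?m \<le> graph_dist E r u + (?m - k)" by (rule graph_dist_le)
  with graph_dist_le[OF u(1)] \<open>k < ?m\<close> have "graph_dist E r u = k" by linarith
  then show ?thesis ..
qed

lemma graph_dist_Suc_predecessor:
  assumes conn: "connected_graph E" and w: "graph_dist E r w = Suc k"
  obtains u where "graph_dist E r u = k" "E u w"
proof -
  have "(E ^^ Suc k) r w" using relpowp_graph_dist[OF conn, of r w] w by simp
  then obtain u where u: "(E ^^ k) r u" "E u w" by (auto elim: relpowp_Suc_E)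
  have "(E ^^ Suc (graph_dist E r u)) r w"
    using relpowp_graph_dist[OF conn, of r u] u(2) by (rule relpowp_Suc_I)
  then have "Suc k \<le> Suc (graph_dist E r u)" using graph_dist_le w by metis
  with graph_dist_le[OF u(1)] have "graph_dist E r u = k" by simp
  with u that show ?thesis by blast
qed

lemma ex_geodesic_segment:
  assumes fin: "\<And>v. finite (nbrs E v)" and conn: "connected_graph E"
    and inf: "infinite (UNIV :: 'a set)"
  shows "\<exists>p::nat \<Rightarrow> 'a. (\<forall>i\<le>n. graph_dist E r (p i) = a + i) \<and> (\<forall>i<n. E (p i) (p (Suc i)))"
proof (induction n arbitrary: a)
  case 0
  obtain u where "graph_dist E r u = a" using ex_vertex_at_graph_dist[OF fin conn inf] by blast
  then show ?case by (intro exI[of _ "\<lambda>_. u"]) auto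
next
  case (Suc n)
  obtain p where p: "\<forall>i\<le>n. graph_dist E r (p i) = Suc a + i" "\<forall>i<n. E (p i) (p (Suc i))"
    using Suc[of "Suc a"] by blast
  obtain u where u: "graph_dist E r u = a" "E u (p 0)"
    using graph_dist_Suc_predecessor[OF conn, of r "p 0" a] p(1) by auto
  have "\<forall>i\<le>Suc n. graph_dist E r (case_nat u p i) = a + i"
    using p(1) u by (auto split: nat.split)
  moreover have "\<forall>i<Suc n. E (case_nat u p i) (case_nat u p (Suc i))"
    using p(2) u by (auto simp: less_Suc_eq_0_disj)
  ultimately show ?case by blast
qed

lemma ex_disjoint_paths:
  assumes fin: "\<And>v. finite (nbrs E v)" and conn: "connected_graph E"
    and inf: "infinite (UNIV :: 'a set)"
  obtains P :: "nat \<Rightarrow> nat \<Rightarrow> 'a"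
  where "\<And>j i j' i'. \<lbrakk>P j i = P j' i'; i \<le> n; i' \<le> n\<rbrakk> \<Longrightarrow> j = j' \<and> i = i'"
    and "\<And>j i. i < n \<Longrightarrow> E (P j i) (P j (Suc i))"
proof -
  fix r :: 'a
  have "\<forall>j. \<exists>p. (\<forall>i\<le>n. graph_dist E r (p i) = j * Suc n + i) \<and> (\<forall>i<n. E (p i) (p (Suc i)))"
    using ex_geodesic_segment[OF fin conn inf] by blast
  from choice[OF this] obtain P where
    P: "\<And>j i. i \<le> n \<Longrightarrow> graph_dist E r (P j i) = j * Suc n + i"
      "\<And>j i. i < n \<Longrightarrow> E (P j i) (P j (Suc i))"
    by blast
  have "j = j' \<and> i = i'" if "P j i = P j' i'" "i \<le> n" "i' \<le> n" for j i j' i'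
  proof -
    \<comment> \<open>the distance j(n+1)+i from r determines both j and i\<close>
    from that have "i + j * Suc n = i' + j' * Suc n" using P(1) by (metis add.commute)
    moreover have "(i + j * Suc n) div Suc n = j" "(i' + j' * Suc n) div Suc n = j'"
      using \<open>i \<le> n\<close> \<open>i' \<le> n\<close> by (simp_all only: div_mult_self1) simp_all
    ultimately show "j = j' \<and> i = i'" by (metis add_right_cancel)
  qed
  with P(2) that show ?thesis by blast
qed

lemma regular_graph_degree_pos:
  assumes inf: "infinite (UNIV :: 'a set)" and conn: "connected_graph (E :: 'a \<Rightarrow> 'a \<Rightarrow> bool)"
    and reg: "regular_graph E d"
  shows "0 < d"
proof -
  obtain r w :: 'a where "w \<noteq> r"
    using ex_new_if_finite[OF inf, of "{r}"] by auto
  moreover have "E\<^sup>*\<^sup>* r w" using conn unfolding connected_graph_def by blast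
  ultimately obtain y where "y \<in> nbrs E r"
    by (auto simp: nbrs_def elim: converse_rtranclpE)
  with reg show ?thesis
    unfolding regular_graph_def by (metis card_gt_0_iff empty_iff)
qed

lemma finite_local_labelings:
  "finite (nbrs E v) \<Longrightarrow> finite (local_labelings E d v)"
  unfolding local_labelings_def
  by (rule finite_subset[of _ "{1..d} \<rightarrow>\<^sub>E nbrs E v"]) (auto intro: finite_PiE)

lemma restrict_in_local_labelings:
  "bij_betw h {1..d} (nbrs E v) \<Longrightarrow> restrict h {1..d} \<in> local_labelings E d v"
  unfolding local_labelings_def by (auto dest: bij_betw_imp_funcset)

lemma card_local_labelings_le:
  assumes "finite (nbrs E v)" "card (nbrs E v) = d"
  shows "card (local_labelings E d v) \<le> d ^ d"
proof -
  have "card (local_labelings E d v) \<le> card ({1..d} \<rightarrow>\<^sub>E nbrs E v)"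
    using assms unfolding local_labelings_def by (intro card_mono finite_PiE) auto
  also have "\<dots> = d ^ d" using assms by (simp add: card_PiE)
  finally show ?thesis .
qed

lemma local_labeling_with_value:
  assumes fin: "finite (nbrs E v)" and card: "card (nbrs E v) = d"
    and a: "a \<in> {1..d}" and w: "E v w"
  obtains f where "f \<in> local_labelings E d v" "f a = w"
proof -
  have w': "w \<in> nbrs E v" using w by (simp add: nbrs_def)
  have "card ({1..d} - {a}) = card (nbrs E v - {w})"
    using a w' fin card by (simp add: card_Diff_singleton)
  then obtain h where h: "bij_betw h ({1..d} - {a}) (nbrs E v - {w})"
    using finite_same_card_bij fin by (metis finite_Diff finite_atLeastAtMost)
  have "bij_betw (h(a := w)) ({1..d} - {a}) (nbrs E v - {w})"
    using h by (rule bij_betw_cong[THEN iffD1, rotated]) auto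
  then have "bij_betw (h(a := w)) (({1..d} - {a}) \<union> {a}) ((nbrs E v - {w}) \<union> {(h(a := w)) a})"
    by (intro notIn_Un_bij_betw) auto
  moreover have "({1..d} - {a}) \<union> {a} = {1..d}" "(nbrs E v - {w}) \<union> {w} = nbrs E v"
    using a w' by auto
  ultimately have b: "bij_betw (h(a := w)) {1..d} (nbrs E v)" by simp
  with a that restrict_in_local_labelings show ?thesis by fastforce
qed

lemma local_labelings_nonempty:
  assumes fin: "finite (nbrs E v)" and card: "card (nbrs E v) = d"
  shows "local_labelings E d v \<noteq> {}"
proof -
  obtain h where h: "bij_betw h {1..d} (nbrs E v)"
    using finite_same_card_bij[OF _ fin] card by (metis card_atLeastAtMost diff_Suc_1 finite_atLeastAtMost)
  then show ?thesis by (blast dest: restrict_in_local_labelings)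
qed

lemma measure_local_labelings_with_value_ge:
  assumes fin: "finite (nbrs E v)" and card: "card (nbrs E v) = d"
    and a: "a \<in> {1..d}" and w: "E v w"
  shows "1 / real (d ^ d) \<le> measure (uniform_count_measure (local_labelings E d v))
                                   {f \<in> local_labelings E d v. f a = w}"
proof -
  let ?L = "local_labelings E d v"
  obtain f where "f \<in> ?L" "f a = w" using local_labeling_with_value[OF assms] .
  then have "1 \<le> card {f \<in> ?L. f a = w}"
    using finite_local_labelings[OF fin] by (simp add: Suc_le_eq card_gt_0_iff) blast
  moreover have "0 < card ?L"
    using finite_local_labelings[OF fin] local_labelings_nonempty[OF fin card] by (simp add: card_gt_0_iff)
  ultimately have "1 / real (d ^ d) \<le> card {f \<in> ?L. f a = w} / real (card ?L)"
    using card_local_labelings_le[OF fin card]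
    by (intro frac_le) auto
  also have "\<dots> = measure (uniform_count_measure ?L) {f \<in> ?L. f a = w}"
    using finite_local_labelings[OF fin] by (intro measure_uniform_count_measure[symmetric]) auto
  finally show ?thesis .
qed

lemma walk_step_power_along_path:
  assumes "0 < d" and step: "\<And>i. i < n \<Longrightarrow> L (p i) (i mod d + 1) = p (Suc i)"
  shows "i \<le> n \<Longrightarrow> (walk_step L d ^^ i) (p 0, 1) = (p i, i mod d + 1)"
proof (induction i)
  case (Suc i)
  then show ?case
    using step[of i] \<open>0 < d\<close> by (simp add: walk_step_def mod_Suc_eq)
qed simp

lemma visits_at_least_along_path:
  assumes "0 < d" and inj: "inj_on p {..<n}"
    and step: "\<And>i. i < n \<Longrightarrow> L (p i) (i mod d + 1) = p (Suc i)"
  shows "visits_at_least L d (p 0) 1 n"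
proof -
  have "walk_pos L d (p 0) 1 i = p i" if "i < n" for i
    using walk_step_power_along_path[of d n L p i] assms that by (simp add: walk_pos_def)
  then have "p ` {..<n} \<subseteq> visited L d (p 0) 1"
    unfolding visited_def by (metis image_subsetI lessThan_iff rangeI)
  moreover have "card (p ` {..<n}) = n"
    using inj by (simp add: card_image)
  ultimately show ?thesis
    unfolding visits_at_least_def by blast
qed

lemma AE_random_labeling_follows_infinitely_many_paths:
  fixes P :: "nat \<Rightarrow> nat \<Rightarrow> 'a"
  assumes reg: "regular_graph E d" and "0 < d"
    and P_inj: "\<And>j i j' i'. \<lbrakk>P j i = P j' i'; i \<le> n; i' \<le> n\<rbrakk> \<Longrightarrow> j = j' \<and> i = i'"
    and path: "\<And>j i. i < n \<Longrightarrow> E (P j i) (P j (Suc i))"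
  shows "AE L in random_labeling E d.
           infinite {j. \<forall>i<n. L (P j i) (i mod d + 1) = P j (Suc i)}"
proof -
  have fin: "finite (nbrs E v)" and card: "card (nbrs E v) = d" for v
    using reg unfolding regular_graph_def by auto
  define M where "M v = uniform_count_measure (local_labelings E d v)" for v
  define K where "K j = P j ` {..<n}" for j
  define Y where "Y j v = {f \<in> local_labelings E d v.
                            \<forall>i<n. P j i = v \<longrightarrow> f (i mod d + 1) = P j (Suc i)}" for j v
  have P_eq: "P j i = P j' i' \<longleftrightarrow> j = j' \<and> i = i'" if "i < n" "i' < n" for j j' i i'
    using P_inj[of j i j' i'] that by auto
  have "disjoint_family K"
    unfolding disjoint_family_on_def K_def using P_eq by fastforce
  have card_K: "card (K j) = n" for j
    unfolding K_def using P_eq by (subst card_image) (auto intro: inj_onI)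
  have Y_eq: "Y j (P j i) = {f \<in> local_labelings E d (P j i). f (i mod d + 1) = P j (Suc i)}"
    if "i < n" for j i
    unfolding Y_def using P_eq that by auto
  have "1 / real (d ^ d) \<le> measure (M v) (Y j v)" if v: "v \<in> K j" for v j
  proof -
    obtain i where i: "i < n" "v = P j i" using v unfolding K_def by auto
    have "i mod d + 1 \<in> {1..d}" using \<open>0 < d\<close> by (simp add: Suc_le_eq)
    then show ?thesis
      unfolding M_def i(2) Y_eq[OF i(1)]
      by (rule measure_local_labelings_with_value_ge[OF fin card _ path[OF i(1)]])
  qed
  then have "(1 / real (d ^ d)) ^ n \<le> (\<Prod>v\<in>K j. measure (M v) (Y j v))" for j
    using prod_mono[of "K j" "\<lambda>_. 1 / real (d ^ d)"] by (simp add: card_K)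
  moreover have "prob_space (M v)" for v
    unfolding M_def
    by (intro prob_space_uniform_count_measure finite_local_labelings local_labelings_nonempty fin card)
  moreover have "Y j v \<in> sets (M v)" for j v
    unfolding M_def Y_def by (auto simp: sets_uniform_count_measure)
  ultimately have cylinders: "AE L in PiM UNIV M. infinite {j. \<forall>v\<in>K j. L v \<in> Y j v}"
    using \<open>disjoint_family K\<close> \<open>0 < d\<close>
    by (intro AE_PiM_infinitely_many_disjoint_cylinders) (auto simp: K_def[abs_def])
  have RL: "random_labeling E d = PiM UNIV M"
    unfolding random_labeling_def M_def ..
  have follows: "{j. \<forall>v\<in>K j. L v \<in> Y j v} \<subseteq> {j. \<forall>i<n. L (P j i) (i mod d + 1) = P j (Suc i)}"
    for L :: "'a \<Rightarrow> nat \<Rightarrow> 'a"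
    unfolding K_def Y_def by auto
  show ?thesis
    unfolding RL using cylinders by (rule eventually_mono) (rule infinite_super[OF follows])
qed

lemma infinitely_many_long_walks_if_paths_followed:
  assumes "0 < d"
    and P_inj: "\<And>j i j' i'. \<lbrakk>P j i = P j' i'; i \<le> n; i' \<le> n\<rbrakk> \<Longrightarrow> j = j' \<and> i = i'"
    and followed: "infinite {j. \<forall>i<n. L (P j i) (i mod d + 1) = P j (Suc i)}"
  shows "infinite {(v, l). l \<in> {1..d} \<and> visits_at_least L d v l n}"
proof -
  let ?J = "{j. \<forall>i<n. L (P j i) (i mod d + 1) = P j (Suc i)}"
  have "inj_on (P j) {..<n}" for j
    using P_inj by (auto intro!: inj_onI)
  then have "(\<lambda>j. (P j 0, 1)) ` ?J \<subseteq> {(v, l). l \<in> {1..d} \<and> visits_at_least L d v l n}"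
    using visits_at_least_along_path[OF \<open>0 < d\<close>] \<open>0 < d\<close> by auto
  moreover have "inj_on (\<lambda>j. (P j 0, 1::nat)) ?J"
    using P_inj by (auto intro!: inj_onI)
  then have "infinite ((\<lambda>j. (P j 0, 1::nat)) ` ?J)"
    using followed by (auto dest: finite_imageD)
  ultimately show ?thesis by (rule infinite_super)
qed

theorem proposition4p5:
  fixes E :: "'a::countable \<Rightarrow> 'a \<Rightarrow> bool" and d :: nat
  assumes "infinite (UNIV :: 'a set)"
    and "connected_graph E"
    and "regular_graph E d"
  shows "AE L in random_labeling E d.
           \<forall>n::nat. infinite {(v, l). l \<in> {1..d} \<and> visits_at_least L d v l n}"
proof (subst AE_all_countable, intro allI)
  fix n
  have "0 < d" using assms by (rule regular_graph_degree_pos)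
  have "finite (nbrs E v)" for v
    using assms(3) unfolding regular_graph_def by auto
  then obtain P :: "nat \<Rightarrow> nat \<Rightarrow> 'a"
    where P_inj: "\<And>j i j' i'. \<lbrakk>P j i = P j' i'; i \<le> n; i' \<le> n\<rbrakk> \<Longrightarrow> j = j' \<and> i = i'"
    and path: "\<And>j i. i < n \<Longrightarrow> E (P j i) (P j (Suc i))"
    using ex_disjoint_paths assms(1,2) by metis
  have "AE L in random_labeling E d.
          infinite {j. \<forall>i<n. L (P j i) (i mod d + 1) = P j (Suc i)}"
    using assms(3) \<open>0 < d\<close> P_inj path by (rule AE_random_labeling_follows_infinitely_many_paths)
  then show "AE L in random_labeling E d.
               infinite {(v, l). l \<in> {1..d} \<and> visits_at_least L d v l n}"
    by (rule eventually_mono) (rule infinitely_many_long_walks_if_paths_followed[OF \<open>0 < d\<close> P_inj])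
qed

end
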